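(* Let $d\ge 1$ and for $n\in\mathbb{N}_0$ put $r_n=\binom{n+d-1}{n}$. Let $w$ be a nonnegative weight function with finite moments on a domain $\Omega\subset\mathbb{R}^d$, and let $(\mathbb{P}_n)_{n\ge0}$ be a family of vectors of polynomials $\mathbb{P}_n=(P_{n,1},\dots,P_{n,r_n})^T$ in $x=(x_1,\dots,x_d)$ forming a system of orthogonal polynomials with respect to $w$, i.e. the entries of $\mathbb{P}_n$ are polynomials of total degree $n$ which, together with all polynomials of degree $<n$, span the polynomials of degree $\le n$, and $$\int_\Omega \mathbb{P}_i(x)\mathbb{P}_j^T(x)w(x)\,dx=\mathbf 0_{r_i\times r_j}\ (i\neq j),\qquad \int_\Omega \mathbb{P}_j(x)\mathbb{P}_j^T(x)w(x)\,dx=\Pi_j^{-1},$$ with $\Pi_j$ an invertible $r_j\times r_j$ matrix. Suppose the three-term recurrence relations $$x_i\mathbb{P}_n(x)=A_{n,i}\mathbb{P}_{n+1}(x)+B_{n,i}\mathbb{P}_n(x)+C_{n,i}\mathbb{P}_{n-1}(x),\quad n\ge0,\ i=1,\dots,d,\ \mathbb{P}_{-1}=0,$$ hold, with $A_{n,i}$ of size $r_n\times r_{n+1}$, $B_{n,i}$ of size $r_n\times r_n$, $C_{n,i}$ of size $r_n\times r_{n-1}$. For $n\ge1$ let $C_n^T$ denote the $dr_{n-1}\times r_n$ matrix obtained by stacking $C_{n,1}^T,\dots,C_{n,d}^T$ vertically (i.e. $C_n^T=(C_{n,1}\ \cdots\ C_{n,d})^T$), and let $G_n=(G_{n,1}\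 \cdots\ G_{n,d})$, with each $G_{n,i}$ of size $r_n\times r_{n-1}$, be any generalized (left) inverse of $C_n^T$, i.e. $G_nC_n^T=\sum_{i=1}^d G_{n,i}C_{n,i}^T=I_{r_n}$. Then for every $n\ge1$, $$\Pi_n=\Pi_0\sum_{i_1,\dots,i_n\in\{1,\dots,d\}}G_{n,i_1}G_{n-1,i_2}\cdots G_{1,i_n}A_{0,i_n}A_{1,i_{n-1}}\cdots A_{n-1,i_1},$$ and this expression does not depend on the choice of the generalized inverses $G_1,\dots,G_n$.
   Context: Here $\Pi_0$ is a scalar since $r_0=1$. The joint matrix $C_n^T$ has full rank $r_n$, so left inverses exist. In the paper's setting the relations $\Pi_{n-1}A_{n-1,i}=C_{n,i}^T\Pi_n$ hold for all $n\ge1$ and $i=1,\dots,d$ (they follow from the orthogonality and the recurrence relations). *)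

theory Defs
  imports "HOL-Analysis.Analysis" "Jordan_Normal_Form.Matrix"
begin

definition monom_fun :: "('d::finite \<Rightarrow> nat) \<Rightarrow> real^'d \<Rightarrow> real" where
  "monom_fun \<alpha> x = (\<Prod>i\<in>UNIV. (vec_nth x i) ^ \<alpha> i)"

definition tdeg :: "('d::finite \<Rightarrow> nat) \<Rightarrow> nat" where
  "tdeg \<alpha> = (\<Sum>i\<in>UNIV. \<alpha> i)"

definition poly_deg_less :: "nat \<Rightarrow> (real^'d::finite \<Rightarrow> real) \<Rightarrow> bool" where
  "poly_deg_less n f \<longleftrightarrow>
     (\<exists>c::('d \<Rightarrow> nat) \<Rightarrow> real. f = (\<lambda>x. \<Sum>\<alpha>\<in>{\<alpha>. tdeg \<alpha> < n}. c \<alpha> * monom_fun \<alpha> x))"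

definition poly_deg_le :: "nat \<Rightarrow> (real^'d::finite \<Rightarrow> real) \<Rightarrow> bool" where
  "poly_deg_le n f \<longleftrightarrow> poly_deg_less (Suc n) f"

definition poly_deg_eq :: "nat \<Rightarrow> (real^'d::finite \<Rightarrow> real) \<Rightarrow> bool" where
  "poly_deg_eq n f \<longleftrightarrow> poly_deg_le n f \<and> \<not> poly_deg_less n f"

definition rdim :: "'d::finite itself \<Rightarrow> nat \<Rightarrow> nat" where
  "rdim _ n = (n + CARD('d) - 1) choose n"

text \<open>The vector P_n(x) = (P_{n,1}(x),...,P_{n,r_n}(x))^T (0-based entries).\<close>
definition Pvec :: "(nat \<Rightarrow> nat \<Rightarrow> real^'d::finite \<Rightarrow> real) \<Rightarrow> nat \<Rightarrow> real^'d \<Rightarrow> real Matrix.vec" where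
  "Pvec P n x = Matrix.vec (rdim TYPE('d) n) (\<lambda>k. P n k x)"

definition gram :: "(nat \<Rightarrow> nat \<Rightarrow> real^'d::finite \<Rightarrow> real) \<Rightarrow> (real^'d \<Rightarrow> real) \<Rightarrow> (real^'d) set
                     \<Rightarrow> nat \<Rightarrow> nat \<Rightarrow> real mat" where
  "gram P w \<Omega> i j = mat (rdim TYPE('d) i) (rdim TYPE('d) j)
      (\<lambda>(k,l). LINT x:\<Omega>|lborel. P i k x * P j l x * w x)"

definition msum :: "nat \<Rightarrow> nat \<Rightarrow> ('i \<Rightarrow> real mat) \<Rightarrow> 'i set \<Rightarrow> real mat" where
  "msum dr dc f S = mat dr dc (\<lambda>(a,b). \<Sum>i\<in>S. f i $$ (a,b))"

fun mprod :: "nat \<Rightarrow> (nat \<Rightarrow> real mat) \<Rightarrow> nat \<Rightarrow> real mat" where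
  "mprod dm f 0 = 1\<^sub>m dm"
| "mprod dm f (Suc k) = mprod dm f k * f k"

text \<open>The expression
  Pi_0 * sum_{i_1..i_n} G_{n,i_1} G_{n-1,i_2} ... G_{1,i_n} A_{0,i_n} A_{1,i_{n-1}} ... A_{n-1,i_1},
  where a choice (i_1,...,i_n) is a function s on {1..n}.\<close>
definition pi_formula :: "'d::finite itself \<Rightarrow> (nat \<Rightarrow> real mat) \<Rightarrow> (nat \<Rightarrow> 'd \<Rightarrow> real mat)
                          \<Rightarrow> (nat \<Rightarrow> 'd \<Rightarrow> real mat) \<Rightarrow> nat \<Rightarrow> real mat" where
  "pi_formula T Pim A G n =
     (Pim 0 $$ (0,0)) \<cdot>\<^sub>m
       msum (rdim TYPE('d) n) (rdim TYPE('d) n)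
         (\<lambda>s. mprod (rdim TYPE('d) n) (\<lambda>j. G (n - j) (s (Suc j))) n
               * mprod (rdim TYPE('d) 0) (\<lambda>k. A k (s (n - k))) n)
         ({1..n} \<rightarrow>\<^sub>E (UNIV::'d set))"

end

theory Submission
  imports Defs "Jordan_Normal_Form.Determinant"
begin

(* Write H_n for the Gram matrix of P_n, so that Pi_n = H_n^-1. Integrating x_i P_n P_(n+1)^T w and
   expanding either x_i P_n or x_i P_(n+1) by the three-term recurrence, orthogonality leaves
   A_(n,i) H_(n+1) = H_n C_(n+1,i)^T, i.e. Pi_n A_(n,i) = C_(n+1,i)^T Pi_(n+1). Multiplying by G_(n+1,i)
   and summing over i, the left-inverse property gives Pi_(n+1) = sum_i G_(n+1,i) Pi_n A_(n,i), for any
   left inverse G_(n+1). Unrolling this recursion down to the 1 x 1 matrix Pi_0 gives the formula. *)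

lemma dim_msum [simp]: "dim_row (msum a b f S) = a" "dim_col (msum a b f S) = b"
  by (simp_all add: msum_def)

lemma msum_index [simp]: "x < a \<Longrightarrow> y < b \<Longrightarrow> msum a b f S $$ (x, y) = (\<Sum>i\<in>S. f i $$ (x, y))"
  by (simp add: msum_def)

lemma msum_cong: "(\<And>i. i \<in> S \<Longrightarrow> f i = g i) \<Longrightarrow> msum a b f S = msum a b g S"
  by (simp add: msum_def)

lemma msum_singleton: "f s \<in> carrier_mat a b \<Longrightarrow> msum a b f {s} = f s"
  by (rule eq_matI) auto

lemma msum_smult:
  assumes "\<And>i. i \<in> S \<Longrightarrow> f i \<in> carrier_mat a b"
  shows "c \<cdot>\<^sub>m msum a b f S = msum a b (\<lambda>i. c \<cdot>\<^sub>m f i) S"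
  by (intro eq_matI) (auto simp: sum_distrib_left intro!: sum.cong dest: assms)

lemma msum_mult_right:
  assumes "\<And>i. i \<in> S \<Longrightarrow> f i \<in> carrier_mat a b" and "N \<in> carrier_mat b c"
  shows "msum a b f S * N = msum a c (\<lambda>i. f i * N) S"
proof (rule eq_matI)
  fix x y assume "x < dim_row (msum a c (\<lambda>i. f i * N) S)" "y < dim_col (msum a c (\<lambda>i. f i * N) S)"
  then have x: "x < a" and y: "y < c" by auto
  have "(msum a b f S * N) $$ (x, y) = (\<Sum>k<b. (\<Sum>i\<in>S. f i $$ (x, k)) * N $$ (k, y))"
    using x y assms(2) by (simp add: scalar_prod_def lessThan_atLeast0)
  also have "\<dots> = (\<Sum>i\<in>S. \<Sum>k<b. f i $$ (x, k) * N $$ (k, y))"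
    by (simp add: sum_distrib_right) (rule sum.swap)
  also have "\<dots> = msum a c (\<lambda>i. f i * N) S $$ (x, y)"
    using x y assms(2) by (auto simp: scalar_prod_def lessThan_atLeast0 intro!: sum.cong dest: assms(1))
  finally show "(msum a b f S * N) $$ (x, y) = msum a c (\<lambda>i. f i * N) S $$ (x, y)" .
qed (use assms in auto)

lemma msum_mult_left:
  assumes "\<And>i. i \<in> S \<Longrightarrow> f i \<in> carrier_mat b c" and "M \<in> carrier_mat a b"
  shows "M * msum b c f S = msum a c (\<lambda>i. M * f i) S"
proof (rule eq_matI)
  fix x y assume "x < dim_row (msum a c (\<lambda>i. M * f i) S)" "y < dim_col (msum a c (\<lambda>i. M * f i) S)"
  then have x: "x < a" and y: "y < c" by auto
  have "(M * msum b c f S) $$ (x, y) = (\<Sum>k<b. M $$ (x, k) * (\<Sum>i\<in>S. f i $$ (k, y)))"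
    using x y assms(2) by (simp add: scalar_prod_def lessThan_atLeast0)
  also have "\<dots> = (\<Sum>i\<in>S. \<Sum>k<b. M $$ (x, k) * f i $$ (k, y))"
    by (simp add: sum_distrib_left) (rule sum.swap)
  also have "\<dots> = msum a c (\<lambda>i. M * f i) S $$ (x, y)"
    using x y assms(2) by (auto simp: scalar_prod_def lessThan_atLeast0 intro!: sum.cong dest: assms(1))
  finally show "(M * msum b c f S) $$ (x, y) = msum a c (\<lambda>i. M * f i) S $$ (x, y)" .
qed (use assms in auto)

lemma msum_mult_both:
  assumes "\<And>i. i \<in> S \<Longrightarrow> f i \<in> carrier_mat b c"
    and "M \<in> carrier_mat a b" and "N \<in> carrier_mat c e"
  shows "M * msum b c f S * N = msum a e (\<lambda>i. M * f i * N) S"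
  using assms by (simp add: msum_mult_left msum_mult_right)

lemma msum_PiE_insert:
  assumes "x \<notin> S"
  shows "msum a b f (Pi\<^sub>E (insert x S) T)
    = msum a b (\<lambda>g. msum a b (\<lambda>y. f (g(x := y))) (T x)) (Pi\<^sub>E S T)"
proof (rule eq_matI)
  fix p q assume "p < dim_row (msum a b (\<lambda>g. msum a b (\<lambda>y. f (g(x := y))) (T x)) (Pi\<^sub>E S T))"
    "q < dim_col (msum a b (\<lambda>g. msum a b (\<lambda>y. f (g(x := y))) (T x)) (Pi\<^sub>E S T))"
  then have pq: "p < a" "q < b" by auto
  have "(\<Sum>s\<in>Pi\<^sub>E (insert x S) T. f s $$ (p, q))
      = (\<Sum>(y, g)\<in>T x \<times> Pi\<^sub>E S T. f (g(x := y)) $$ (p, q))"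
    unfolding PiE_insert_eq
    by (subst sum.reindex[OF inj_combinator[OF assms]]) (simp add: case_prod_unfold o_def)
  also have "\<dots> = (\<Sum>g\<in>Pi\<^sub>E S T. \<Sum>y\<in>T x. f (g(x := y)) $$ (p, q))"
    by (simp add: sum.cartesian_product[symmetric] sum.swap[of _ "T x"])
  finally show "msum a b f (Pi\<^sub>E (insert x S) T) $$ (p, q)
      = msum a b (\<lambda>g. msum a b (\<lambda>y. f (g(x := y))) (T x)) (Pi\<^sub>E S T) $$ (p, q)"
    using pq by simp
qed auto

lemma mprod_carrier:
  assumes "\<And>j. j < k \<Longrightarrow> f j \<in> carrier_mat (d j) (d (Suc j))"
  shows "mprod (d 0) f k \<in> carrier_mat (d 0) (d k)"
  using assms by (induction k) auto

lemma mprod_cong: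
  "dm = dm' \<Longrightarrow> k = k' \<Longrightarrow> (\<And>j. j < k' \<Longrightarrow> f j = g j) \<Longrightarrow> mprod dm f k = mprod dm' g k'"
  by (induction k arbitrary: k') auto

lemma mprod_Suc_left:
  assumes "\<And>j. j \<le> k \<Longrightarrow> f j \<in> carrier_mat (d j) (d (Suc j))"
  shows "mprod (d 0) f (Suc k) = f 0 * mprod (d 1) (\<lambda>j. f (Suc j)) k"
  using assms
proof (induction k)
  case (Suc k)
  have "mprod (d 1) (\<lambda>j. f (Suc j)) k \<in> carrier_mat (d 1) (d (Suc k))"
    using mprod_carrier[of k "\<lambda>j. f (Suc j)" "\<lambda>j. d (Suc j)"] Suc.prems by simp
  with Suc show ?case
    by (simp add: assoc_mult_mat[of "f 0" "d 0" "d 1" _ "d (Suc k)" "f (Suc k)" "d (Suc (Suc k))"])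
qed simp

lemma mult_mat_regroup:
  fixes M L X R N :: "'a::comm_ring_1 mat"
  assumes "M \<in> carrier_mat a b" "L \<in> carrier_mat b c" "X \<in> carrier_mat c c'"
    "R \<in> carrier_mat c' b'" "N \<in> carrier_mat b' e"
  shows "M * (L * X * R) * N = (M * L) * X * (R * N)"
proof -
  have "M * (L * X * R) * N = M * (L * X * R * N)"
    using assms by (intro assoc_mult_mat) auto
  also have "L * X * R * N = L * X * (R * N)"
    using assms by (intro assoc_mult_mat) auto
  also have "M * (L * X * (R * N)) = M * (L * X) * (R * N)"
    using assms by (intro assoc_mult_mat[symmetric]) auto
  also have "M * (L * X) = M * L * X"
    using assms by (intro assoc_mult_mat[symmetric]) auto
  finally show ?thesis .
qed

lemma msum_recurrence_unfold_upto:
  fixes X :: "nat \<Rightarrow> real mat" and L R :: "nat \<Rightarrow> 'i \<Rightarrow> real mat"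
  assumes X: "\<And>m. X m \<in> carrier_mat (d m) (d m)"
    and L: "\<And>m i. m \<in> {1..n} \<Longrightarrow> L m i \<in> carrier_mat (d m) (d (m - 1))"
    and R: "\<And>m i. R m i \<in> carrier_mat (d m) (d (Suc m))"
    and rec: "\<And>m. m \<in> {1..n} \<Longrightarrow> X m = msum (d m) (d m) (\<lambda>i. L m i * X (m - 1) * R (m - 1) i) UNIV"
    and "k \<le> n"
  shows "X n = msum (d n) (d n)
    (\<lambda>s. mprod (d n) (\<lambda>j. L (n - j) (s (Suc j))) k * X (n - k)
         * mprod (d (n - k)) (\<lambda>j. R (n - k + j) (s (k - j))) k)
    ({1..k} \<rightarrow>\<^sub>E UNIV)"
proof -
  \<comment> \<open>after k unfolding steps, s j is the choice made at level n + 1 - j\<close>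
  define Lw where "Lw k s = mprod (d n) (\<lambda>j. L (n - j) (s (Suc j))) k" for k and s :: "nat \<Rightarrow> 'i"
  define Rw where "Rw k s = mprod (d (n - k)) (\<lambda>j. R (n - k + j) (s (k - j))) k"
    for k and s :: "nat \<Rightarrow> 'i"
  have L': "L (n - j) i \<in> carrier_mat (d (n - j)) (d (n - Suc j))" if "j < n" for j i
    using L[of "n - j" i] that by simp
  have R': "R (n - Suc j) i \<in> carrier_mat (d (n - Suc j)) (d (n - j))" if "j < n" for j i
    using R[of "n - Suc j" i] that by (simp add: Suc_diff_Suc)
  have Lw_carrier: "Lw k s \<in> carrier_mat (d n) (d (n - k))" if "k \<le> n" for k s
    using mprod_carrier[of k "\<lambda>j. L (n - j) (s (Suc j))" "\<lambda>j. d (n - j)"] L' that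
    by (simp add: Lw_def)
  have Rw_carrier: "Rw k s \<in> carrier_mat (d (n - k)) (d n)" if "k \<le> n" for k s
    using mprod_carrier[of k "\<lambda>j. R (n - k + j) (s (k - j))" "\<lambda>j. d (n - k + j)"] R that
    by (simp add: Rw_def)
  have Lw_upd: "Lw (Suc k) (s(Suc k := y)) = Lw k s * L (n - k) y" for k s y
    by (simp add: Lw_def cong: mprod_cong)
  have Rw_upd: "Rw (Suc k) (s(Suc k := y)) = R (n - Suc k) y * Rw k s" if "k < n" for k s y
  proof -
    let ?f = "\<lambda>j. R (n - Suc k + j) ((s(Suc k := y)) (Suc k - j))"
    have "Rw (Suc k) (s(Suc k := y)) = ?f 0 * mprod (d (n - Suc k + 1)) (\<lambda>j. ?f (Suc j)) k"
      using mprod_Suc_left[of k ?f "\<lambda>j. d (n - Suc k + j)"] R by (simp add: Rw_def del: mprod.simps(2))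
    also have "\<dots> = R (n - Suc k) y * Rw k s"
      unfolding Rw_def using that
      by (intro arg_cong2[where f = "(*)"] mprod_cong) (auto simp: Suc_diff_Suc intro!: arg_cong2[where f = R])
    finally show ?thesis .
  qed
  have "X n = msum (d n) (d n) (\<lambda>s. Lw k s * X (n - k) * Rw k s) ({1..k} \<rightarrow>\<^sub>E UNIV)"
    if "k \<le> n" for k
    using that
  proof (induction k)
    case 0
    then show ?case
      using X[of n] by (simp add: Lw_def Rw_def msum_singleton)
  next
    case (Suc k)
    then have k: "k < n" by simp
    have unfold_X: "X (n - k) = msum (d (n - k)) (d (n - k))
        (\<lambda>y. L (n - k) y * X (n - Suc k) * R (n - Suc k) y) UNIV"
      using rec[of "n - k"] k by simp
    have step_carrier: "L (n - k) y * X (n - Suc k) * R (n - Suc k) y \<in> carrier_mat (d (n - k)) (d (n - k))"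
      for y
      using mult_carrier_mat[OF mult_carrier_mat[OF L'[OF k] X] R'[OF k]] .
    have "X n = msum (d n) (d n) (\<lambda>s. Lw k s * X (n - k) * Rw k s) ({1..k} \<rightarrow>\<^sub>E UNIV)"
      using Suc by simp
    also have "\<dots> = msum (d n) (d n) (\<lambda>s. msum (d n) (d n)
        (\<lambda>y. Lw k s * (L (n - k) y * X (n - Suc k) * R (n - Suc k) y) * Rw k s) UNIV)
        ({1..k} \<rightarrow>\<^sub>E UNIV)"
      unfolding unfold_X using step_carrier Lw_carrier Rw_carrier k
      by (intro msum_cong msum_mult_both) auto
    also have "\<dots> = msum (d n) (d n) (\<lambda>s. msum (d n) (d n)
        (\<lambda>y. Lw (Suc k) (s(Suc k := y)) * X (n - Suc k) * Rw (Suc k) (s(Suc k := y))) UNIV)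
        ({1..k} \<rightarrow>\<^sub>E UNIV)"
      unfolding Lw_upd Rw_upd[OF k] using k
      by (intro msum_cong mult_mat_regroup[OF Lw_carrier L'[OF k] X R'[OF k] Rw_carrier]) simp_all
    also have "\<dots> = msum (d n) (d n) (\<lambda>s. Lw (Suc k) s * X (n - Suc k) * Rw (Suc k) s)
        ({1..Suc k} \<rightarrow>\<^sub>E UNIV)"
      by (simp add: atLeastAtMostSuc_conv msum_PiE_insert)
    finally show ?case .
  qed
  then show ?thesis
    using \<open>k \<le> n\<close> by (simp add: Lw_def Rw_def)
qed

lemma mult_mat_1x1_middle:
  fixes X M N :: "'a::comm_ring_1 mat"
  assumes "X \<in> carrier_mat 1 1" "M \<in> carrier_mat a 1" "N \<in> carrier_mat 1 b"
  shows "M * X * N = X $$ (0, 0) \<cdot>\<^sub>m (M * N)"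
proof -
  have "X = X $$ (0, 0) \<cdot>\<^sub>m 1\<^sub>m 1"
    using assms(1) by (intro eq_matI) auto
  then have "M * X = X $$ (0, 0) \<cdot>\<^sub>m M"
    using assms(2) by (metis mult_smult_distrib right_mult_one_mat one_carrier_mat)
  then show ?thesis
    using assms(2,3) by (simp add: mult_smult_assoc_mat)
qed

lemma rdim_0 [simp]: "rdim TYPE('d::finite) 0 = 1"
  by (simp add: rdim_def)

lemma pi_formula_of_recurrence:
  fixes X :: "nat \<Rightarrow> real mat" and L R :: "nat \<Rightarrow> 'd::finite \<Rightarrow> real mat"
  defines "r \<equiv> rdim TYPE('d)"
  assumes X: "\<And>m. X m \<in> carrier_mat (r m) (r m)"
    and L: "\<And>m i. m \<in> {1..n} \<Longrightarrow> L m i \<in> carrier_mat (r m) (r (m - 1))"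
    and R: "\<And>m i. R m i \<in> carrier_mat (r m) (r (Suc m))"
    and rec: "\<And>m. m \<in> {1..n} \<Longrightarrow> X m = msum (r m) (r m) (\<lambda>i. L m i * X (m - 1) * R (m - 1) i) UNIV"
  shows "X n = pi_formula TYPE('d) X R L n"
proof -
  define Lw where "Lw s = mprod (r n) (\<lambda>j. L (n - j) (s (Suc j))) n" for s :: "nat \<Rightarrow> 'd"
  define Rw where "Rw s = mprod (r 0) (\<lambda>j. R j (s (n - j))) n" for s :: "nat \<Rightarrow> 'd"
  have L': "L (n - j) i \<in> carrier_mat (r (n - j)) (r (n - Suc j))" if "j < n" for j i
    using L[of "n - j" i] that by simp
  have Lw_carrier: "Lw s \<in> carrier_mat (r n) 1" for s
    using mprod_carrier[of n "\<lambda>j. L (n - j) (s (Suc j))" "\<lambda>j. r (n - j)"] L'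
    by (simp add: Lw_def r_def)
  have Rw_carrier: "Rw s \<in> carrier_mat 1 (r n)" for s
    using mprod_carrier[of n "\<lambda>j. R j (s (n - j))" r] R by (simp add: Rw_def r_def)
  have "X n = msum (r n) (r n) (\<lambda>s. Lw s * X 0 * Rw s) ({1..n} \<rightarrow>\<^sub>E UNIV)"
    using msum_recurrence_unfold_upto[of X r n L R n, OF X L R rec] by (simp add: Lw_def Rw_def)
  also have "\<dots> = msum (r n) (r n) (\<lambda>s. X 0 $$ (0, 0) \<cdot>\<^sub>m (Lw s * Rw s)) ({1..n} \<rightarrow>\<^sub>E UNIV)"
    using X[of 0] Lw_carrier Rw_carrier by (intro msum_cong mult_mat_1x1_middle) (auto simp: r_def)
  also have "\<dots> = X 0 $$ (0, 0) \<cdot>\<^sub>m msum (r n) (r n) (\<lambda>s. Lw s * Rw s) ({1..n} \<rightarrow>\<^sub>E UNIV)"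
    using mult_carrier_mat[OF Lw_carrier Rw_carrier] by (intro msum_smult[symmetric]) auto
  finally show ?thesis
    by (simp add: pi_formula_def Lw_def Rw_def r_def)
qed

lemma eq_msum_of_left_inverse:
  fixes Y X :: "real mat" and G Ct A :: "'i \<Rightarrow> real mat"
  assumes G: "\<And>i. i \<in> S \<Longrightarrow> G i \<in> carrier_mat a b"
    and Ct: "\<And>i. i \<in> S \<Longrightarrow> Ct i \<in> carrier_mat b a"
    and A: "\<And>i. i \<in> S \<Longrightarrow> A i \<in> carrier_mat b a"
    and Y: "Y \<in> carrier_mat a a" and X: "X \<in> carrier_mat b b"
    and left_inverse: "msum a a (\<lambda>i. G i * Ct i) S = 1\<^sub>m a"
    and intertwining: "\<And>i. i \<in> S \<Longrightarrow> Ct i * Y = X * A i"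
  shows "Y = msum a a (\<lambda>i. G i * X * A i) S"
proof -
  have "Y = msum a a (\<lambda>i. G i * Ct i) S * Y"
    using Y by (simp add: left_inverse)
  also have "\<dots> = msum a a (\<lambda>i. G i * Ct i * Y) S"
    using G Ct Y by (intro msum_mult_right) (blast intro: mult_carrier_mat)+
  also have "\<dots> = msum a a (\<lambda>i. G i * X * A i) S"
  proof (rule msum_cong)
    fix i
    assume i: "i \<in> S"
    show "G i * Ct i * Y = G i * X * A i"
      using G[OF i] Ct[OF i] Y X A[OF i] by (simp add: intertwining[OF i])
  qed
  finally show ?thesis .
qed

lemma intertwining_of_inverses:
  fixes H H' Pi Pi' M N :: "'a::field mat"
  assumes H: "H \<in> carrier_mat a a" and Pi: "Pi \<in> carrier_mat a a" and HPi: "H * Pi = 1\<^sub>m a"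
    and H': "H' \<in> carrier_mat b b" and Pi': "Pi' \<in> carrier_mat b b" and HPi': "H' * Pi' = 1\<^sub>m b"
    and M: "M \<in> carrier_mat a b" and N: "N \<in> carrier_mat a b"
    and MH': "M * H' = H * N"
  shows "Pi * M = N * Pi'"
proof -
  have PiH: "Pi * H = 1\<^sub>m a"
    by (rule mat_mult_left_right_inverse[OF H Pi HPi])
  have "Pi * M = Pi * (M * (H' * Pi'))"
    using M by (simp add: HPi')
  also have "\<dots> = Pi * (M * H') * Pi'"
    using Pi M H' Pi' by (simp add: assoc_mult_mat[of M a b H' b Pi' b]
        assoc_mult_mat[of Pi a a "M * H'" b Pi' b])
  also have "\<dots> = (Pi * H) * N * Pi'"
    using Pi H N by (simp add: MH' assoc_mult_mat[of Pi a a H a N b])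
  also have "\<dots> = N * Pi'"
    using N by (simp add: PiH)
  finally show ?thesis .
qed

lemma monom_fun_add: "monom_fun (\<lambda>i. \<alpha> i + \<beta> i) x = monom_fun \<alpha> x * monom_fun \<beta> x"
  by (simp add: monom_fun_def power_add prod.distrib)

lemma set_integrable_sum:
  fixes f :: "'i \<Rightarrow> 'a \<Rightarrow> real"
  assumes "\<And>i. i \<in> I \<Longrightarrow> set_integrable M A (f i)"
  shows "set_integrable M A (\<lambda>x. \<Sum>i\<in>I. f i x)"
  using assms unfolding set_integrable_def by (simp add: sum_distrib_left)

lemma set_integral_sum:
  fixes f :: "'i \<Rightarrow> 'a \<Rightarrow> real"
  assumes "\<And>i. i \<in> I \<Longrightarrow> set_integrable M A (f i)"
  shows "(LINT x:A|M. (\<Sum>i\<in>I. f i x)) = (\<Sum>i\<in>I. LINT x:A|M. f i x)"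
  using assms unfolding set_integrable_def set_lebesgue_integral_def
  by (simp add: sum_distrib_left integral_sum)

lemma set_integrable_poly_mult_weight:
  assumes moments: "\<And>\<alpha>. set_integrable lborel \<Omega> (\<lambda>x. w x * monom_fun \<alpha> x)"
    and "poly_deg_less a f" and "poly_deg_less b g"
  shows "set_integrable lborel \<Omega> (\<lambda>x. f x * g x * w x)"
proof -
  obtain c e where
    f: "f = (\<lambda>x. \<Sum>\<alpha>\<in>{\<alpha>. tdeg \<alpha> < a}. c \<alpha> * monom_fun \<alpha> x)" and
    g: "g = (\<lambda>x. \<Sum>\<beta>\<in>{\<beta>. tdeg \<beta> < b}. e \<beta> * monom_fun \<beta> x)"
    using assms(2,3) unfolding poly_deg_less_def by blast
  have "f x * g x * w x = (\<Sum>\<alpha>\<in>{\<alpha>. tdeg \<alpha> < a}. \<Sum>\<beta>\<in>{\<beta>. tdeg \<beta> < b}.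
      c \<alpha> * e \<beta> * (w x * monom_fun (\<lambda>i. \<alpha> i + \<beta> i) x))" for x
    unfolding f g sum_product sum_distrib_right by (simp add: monom_fun_add sum_distrib_left mult_ac)
  then show ?thesis
    by (simp add: set_integrable_sum moments)
qed

lemma gram_carrier: "gram P w \<Omega> a b \<in> carrier_mat (rdim TYPE('d::finite) a) (rdim TYPE('d) b)"
  for P :: "nat \<Rightarrow> nat \<Rightarrow> real^'d \<Rightarrow> real"
  by (simp add: gram_def)

lemma dim_gram [simp]:
  "dim_row (gram P w \<Omega> a b) = rdim TYPE('d::finite) a" "dim_col (gram P w \<Omega> a b) = rdim TYPE('d) b"
  for P :: "nat \<Rightarrow> nat \<Rightarrow> real^'d \<Rightarrow> real"
  by (simp_all add: gram_def)

lemma gram_index: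
  "k < rdim TYPE('d::finite) a \<Longrightarrow> l < rdim TYPE('d) b \<Longrightarrow>
    gram P w \<Omega> a b $$ (k, l) = (LINT x:\<Omega>|lborel. P a k x * P b l x * w x)"
  for P :: "nat \<Rightarrow> nat \<Rightarrow> real^'d \<Rightarrow> real"
  by (simp add: gram_def)

lemma transpose_gram: "(gram P w \<Omega> a b)\<^sup>T = gram P w \<Omega> b a"
  by (rule eq_matI) (auto simp: gram_def mult_ac)

locale three_term_recurrence =
  fixes \<Omega> :: "(real^'d::finite) set" and w :: "real^'d \<Rightarrow> real"
    and P :: "nat \<Rightarrow> nat \<Rightarrow> real^'d \<Rightarrow> real" and A B C :: "nat \<Rightarrow> 'd \<Rightarrow> real mat"
  assumes moments: "\<And>\<alpha>. set_integrable lborel \<Omega> (\<lambda>x. w x * monom_fun \<alpha> x)"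
    and P_poly: "\<And>n k. k < rdim TYPE('d) n \<Longrightarrow> poly_deg_le n (P n k)"
    and orth: "\<And>i j. i \<noteq> j \<Longrightarrow> gram P w \<Omega> i j = 0\<^sub>m (rdim TYPE('d) i) (rdim TYPE('d) j)"
    and A_carrier: "\<And>n i. A n i \<in> carrier_mat (rdim TYPE('d) n) (rdim TYPE('d) (Suc n))"
    and B_carrier: "\<And>n i. B n i \<in> carrier_mat (rdim TYPE('d) n) (rdim TYPE('d) n)"
    and C_carrier: "\<And>n i. C n i \<in> carrier_mat (rdim TYPE('d) n) (rdim TYPE('d) (n - 1))"
    and recur: "\<And>n i x. x $ i \<cdot>\<^sub>v Pvec P n x
      = A n i *\<^sub>v Pvec P (Suc n) x + B n i *\<^sub>v Pvec P n x + C n i *\<^sub>v Pvec P (n - 1) x"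
begin

lemma P_integrable:
  "k < rdim TYPE('d) a \<Longrightarrow> l < rdim TYPE('d) b \<Longrightarrow>
    set_integrable lborel \<Omega> (\<lambda>x. P a k x * P b l x * w x)"
  using set_integrable_poly_mult_weight[OF moments] P_poly unfolding poly_deg_le_def by blast

lemma set_integral_mult_Pvec:
  assumes M: "M \<in> carrier_mat c (rdim TYPE('d) p)" and k: "k < c" and l: "l < rdim TYPE('d) q"
  shows "set_integrable lborel \<Omega> (\<lambda>x. (M *\<^sub>v Pvec P p x) $ k * P q l x * w x)"
    and "(LINT x:\<Omega>|lborel. (M *\<^sub>v Pvec P p x) $ k * P q l x * w x) = (M * gram P w \<Omega> p q) $$ (k, l)"
proof -
  have expand: "(M *\<^sub>v Pvec P p x) $ k * P q l x * w x = (\<Sum>m<rdim TYPE('d) p. M $$ (k, m) * (P p m x * P q l x * w x))"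
    for x
  proof -
    have "(M *\<^sub>v Pvec P p x) $ k = (\<Sum>m<rdim TYPE('d) p. M $$ (k, m) * P p m x)"
      using M k by (simp add: Pvec_def scalar_prod_def lessThan_atLeast0)
    then show ?thesis
      by (simp add: sum_distrib_right mult.assoc)
  qed
  have integrable: "\<And>m. m \<in> {..<rdim TYPE('d) p} \<Longrightarrow>
      set_integrable lborel \<Omega> (\<lambda>x. M $$ (k, m) * (P p m x * P q l x * w x))"
    using P_integrable l by simp
  show "set_integrable lborel \<Omega> (\<lambda>x. (M *\<^sub>v Pvec P p x) $ k * P q l x * w x)"
    unfolding expand by (rule set_integrable_sum[OF integrable])
  have "(LINT x:\<Omega>|lborel. (M *\<^sub>v Pvec P p x) $ k * P q l x * w x)
      = (\<Sum>m<rdim TYPE('d) p. LINT x:\<Omega>|lborel. M $$ (k, m) * (P p m x * P q l x * w x))"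
    unfolding expand by (rule set_integral_sum[OF integrable])
  also have "\<dots> = (\<Sum>m<rdim TYPE('d) p. M $$ (k, m) * gram P w \<Omega> p q $$ (m, l))"
    using l by (simp add: gram_index)
  also have "\<dots> = (M * gram P w \<Omega> p q) $$ (k, l)"
    using M k l by (simp add: gram_def scalar_prod_def lessThan_atLeast0)
  finally show "(LINT x:\<Omega>|lborel. (M *\<^sub>v Pvec P p x) $ k * P q l x * w x) = (M * gram P w \<Omega> p q) $$ (k, l)" .
qed

lemma coordinate_moment:
  assumes k: "k < rdim TYPE('d) n" and l: "l < rdim TYPE('d) q"
  shows "(LINT x:\<Omega>|lborel. x $ i * P n k x * P q l x * w x)
    = (A n i * gram P w \<Omega> (Suc n) q + B n i * gram P w \<Omega> n q + C n i * gram P w \<Omega> (n - 1) q) $$ (k, l)"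
proof -
  have "x $ i * P n k x = (x $ i \<cdot>\<^sub>v Pvec P n x) $ k" for x
    using k by (simp add: Pvec_def)
  also have "(x $ i \<cdot>\<^sub>v Pvec P n x) $ k = (A n i *\<^sub>v Pvec P (Suc n) x) $ k
      + (B n i *\<^sub>v Pvec P n x) $ k + (C n i *\<^sub>v Pvec P (n - 1) x) $ k" for x
    using k A_carrier[of n i] B_carrier[of n i] C_carrier[of n i]
    by (simp add: recur del: index_mult_mat_vec)
  finally have "x $ i * P n k x * P q l x * w x = (A n i *\<^sub>v Pvec P (Suc n) x) $ k * P q l x * w x
      + (B n i *\<^sub>v Pvec P n x) $ k * P q l x * w x + (C n i *\<^sub>v Pvec P (n - 1) x) $ k * P q l x * w x" for x
    by (simp add: distrib_right del: index_mult_mat_vec)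
  then show ?thesis
    using k l A_carrier[of n i] B_carrier[of n i] C_carrier[of n i] gram_carrier[of P w \<Omega>]
    by (simp add: set_integral_mult_Pvec del: index_mult_mat_vec)
qed

lemma A_gram_eq_gram_C_transpose:
  "A n i * gram P w \<Omega> (Suc n) (Suc n) = gram P w \<Omega> n n * (C (Suc n) i)\<^sup>T"
proof (rule eq_matI)
  fix k l
  assume "k < dim_row (gram P w \<Omega> n n * (C (Suc n) i)\<^sup>T)" "l < dim_col (gram P w \<Omega> n n * (C (Suc n) i)\<^sup>T)"
  then have k: "k < rdim TYPE('d) n" and l: "l < rdim TYPE('d) (Suc n)"
    using C_carrier[of "Suc n" i] by (auto simp: gram_def)
  have "(A n i * gram P w \<Omega> (Suc n) (Suc n)) $$ (k, l) = (LINT x:\<Omega>|lborel. x $ i * P n k x * P (Suc n) l x * w x)"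
    using coordinate_moment[OF k l] k l A_carrier[of n i] B_carrier[of n i] C_carrier[of n i]
    by (simp add: orth gram_carrier[of P w \<Omega>])
  also have "\<dots> = (LINT x:\<Omega>|lborel. x $ i * P (Suc n) l x * P n k x * w x)"
    by (simp add: mult_ac)
  also have "\<dots> = (C (Suc n) i * gram P w \<Omega> n n) $$ (l, k)"
    using coordinate_moment[OF l k] k l A_carrier[of "Suc n" i] B_carrier[of "Suc n" i] C_carrier[of "Suc n" i]
    by (simp add: orth gram_carrier[of P w \<Omega>])
  also have "\<dots> = ((C (Suc n) i * gram P w \<Omega> n n)\<^sup>T) $$ (k, l)"
    using k l C_carrier[of "Suc n" i] by simp
  also have "(C (Suc n) i * gram P w \<Omega> n n)\<^sup>T = gram P w \<Omega> n n * (C (Suc n) i)\<^sup>T"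
    using C_carrier[of "Suc n" i] gram_carrier[of P w \<Omega> n n] by (simp add: transpose_mult transpose_gram)
  finally show "(A n i * gram P w \<Omega> (Suc n) (Suc n)) $$ (k, l) = (gram P w \<Omega> n n * (C (Suc n) i)\<^sup>T) $$ (k, l)" .
qed (use A_carrier[of n i] C_carrier[of "Suc n" i] in \<open>auto simp: gram_def\<close>)

end

\<comment> \<open>\<open>P\<^sub>-\<^sub>1 = 0\<close> is encoded by \<open>C\<^sub>0 = 0\<close>; the index \<open>0 - 1\<close> is truncated to \<open>0\<close> on nat\<close>
lemma three_term_recurrence_extend_C:
  fixes \<Omega> :: "(real^'d::finite) set" and w :: "real^'d \<Rightarrow> real"
    and P :: "nat \<Rightarrow> nat \<Rightarrow> real^'d \<Rightarrow> real" and A B C :: "nat \<Rightarrow> 'd \<Rightarrow> real mat"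
  assumes "\<And>\<alpha>. set_integrable lborel \<Omega> (\<lambda>x. w x * monom_fun \<alpha> x)"
    and "\<And>n k. k < rdim TYPE('d) n \<Longrightarrow> poly_deg_le n (P n k)"
    and "\<And>i j. i \<noteq> j \<Longrightarrow> gram P w \<Omega> i j = 0\<^sub>m (rdim TYPE('d) i) (rdim TYPE('d) j)"
    and A_carrier: "\<And>n i. A n i \<in> carrier_mat (rdim TYPE('d) n) (rdim TYPE('d) (Suc n))"
    and B_carrier: "\<And>n i. B n i \<in> carrier_mat (rdim TYPE('d) n) (rdim TYPE('d) n)"
    and C_carrier: "\<And>n i. n \<ge> 1 \<Longrightarrow> C n i \<in> carrier_mat (rdim TYPE('d) n) (rdim TYPE('d) (n - 1))"
    and recur0: "\<And>i x. x $ i \<cdot>\<^sub>v Pvec P 0 x = A 0 i *\<^sub>v Pvec P 1 x + B 0 i *\<^sub>v Pvec P 0 x"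
    and recur: "\<And>n i x. n \<ge> 1 \<Longrightarrow> x $ i \<cdot>\<^sub>v Pvec P n x
      = A n i *\<^sub>v Pvec P (Suc n) x + B n i *\<^sub>v Pvec P n x + C n i *\<^sub>v Pvec P (n - 1) x"
  shows "three_term_recurrence \<Omega> w P A B (\<lambda>n i. if n = 0 then 0\<^sub>m 1 1 else C n i)"
proof
  show "x $ i \<cdot>\<^sub>v Pvec P n x = A n i *\<^sub>v Pvec P (Suc n) x + B n i *\<^sub>v Pvec P n x
      + (if n = 0 then 0\<^sub>m 1 1 else C n i) *\<^sub>v Pvec P (n - 1) x" for n i x
  proof (cases "n = 0")
    case True
    have "0\<^sub>m 1 1 *\<^sub>v Pvec P 0 x = 0\<^sub>v 1"
      by (intro eq_vecI) (auto simp: Pvec_def)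
    then show ?thesis
      using recur0 A_carrier[of 0 i] B_carrier[of 0 i] True by (simp add: Pvec_def del: index_mult_mat_vec)
  qed (simp add: recur)
qed (use assms in auto)

theorem mainTheorem1:
  fixes \<Omega> :: "(real^'d::finite) set"
    and w :: "real^'d \<Rightarrow> real"
    and P :: "nat \<Rightarrow> nat \<Rightarrow> real^'d \<Rightarrow> real"
    and Pim :: "nat \<Rightarrow> real mat"
    and A B C :: "nat \<Rightarrow> 'd \<Rightarrow> real mat"
  defines "r \<equiv> rdim TYPE('d)"
  assumes domain: "open \<Omega>" "connected \<Omega>" "\<Omega> \<noteq> {}"
    and w_nonneg: "\<forall>x\<in>\<Omega>. w x \<ge> 0"
    and moments: "\<forall>\<alpha>::'d \<Rightarrow> nat. set_integrable lborel \<Omega> (\<lambda>x. w x * monom_fun \<alpha> x)"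
    and P_deg: "\<forall>n. \<forall>k<r n. poly_deg_eq n (P n k)"
    and P_span: "\<forall>n f. poly_deg_le n f \<longrightarrow>
                   (\<exists>g c. poly_deg_less n g \<and> f = (\<lambda>x. g x + (\<Sum>k<r n. c k * P n k x)))"
    and orth: "\<forall>i j. i \<noteq> j \<longrightarrow> gram P w \<Omega> i j = 0\<^sub>m (r i) (r j)"
    and Pi_carrier: "\<forall>j. Pim j \<in> carrier_mat (r j) (r j)"
    and Pi_inv: "\<forall>j. invertible_mat (Pim j)"
    and norm: "\<forall>j. gram P w \<Omega> j j * Pim j = 1\<^sub>m (r j)"
    and A_carrier: "\<forall>n i. A n i \<in> carrier_mat (r n) (r (Suc n))"
    and B_carrier: "\<forall>n i. B n i \<in> carrier_mat (r n) (r n)"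
    and C_carrier: "\<forall>n i. n \<ge> 1 \<longrightarrow> C n i \<in> carrier_mat (r n) (r (n - 1))"
    and recur0: "\<forall>i x. vec_nth x i \<cdot>\<^sub>v Pvec P 0 x
                   = A 0 i *\<^sub>v Pvec P 1 x + B 0 i *\<^sub>v Pvec P 0 x"
    and recur: "\<forall>n i x. n \<ge> 1 \<longrightarrow> vec_nth x i \<cdot>\<^sub>v Pvec P n x
                   = A n i *\<^sub>v Pvec P (Suc n) x + B n i *\<^sub>v Pvec P n x + C n i *\<^sub>v Pvec P (n - 1) x"
  shows "\<forall>n\<ge>1. \<forall>G :: nat \<Rightarrow> 'd \<Rightarrow> real mat.
           (\<forall>m\<in>{1..n}. (\<forall>i. G m i \<in> carrier_mat (r m) (r (m - 1)))
                       \<and> msum (r m) (r m) (\<lambda>i. G m i * (C m i)\<^sup>T) UNIV = 1\<^sub>m (r m))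
           \<longrightarrow> Pim n = pi_formula TYPE('d) Pim A G n"
proof (intro allI impI)
  fix n :: nat and G :: "nat \<Rightarrow> 'd \<Rightarrow> real mat"
  assume G: "\<forall>m\<in>{1..n}. (\<forall>i. G m i \<in> carrier_mat (r m) (r (m - 1)))
    \<and> msum (r m) (r m) (\<lambda>i. G m i * (C m i)\<^sup>T) UNIV = 1\<^sub>m (r m)"
  have "three_term_recurrence \<Omega> w P A B (\<lambda>n i. if n = 0 then 0\<^sub>m 1 1 else C n i)"
    using moments P_deg orth A_carrier B_carrier C_carrier recur0 recur unfolding r_def poly_deg_eq_def
    by (intro three_term_recurrence_extend_C) auto
  then have A_gram: "A m i * gram P w \<Omega> (Suc m) (Suc m) = gram P w \<Omega> m m * (C (Suc m) i)\<^sup>T" for m i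
    using three_term_recurrence.A_gram_eq_gram_C_transpose by fastforce
  have Pim_A: "Pim m * A m i = (C (Suc m) i)\<^sup>T * Pim (Suc m)" for m i
    using gram_carrier[of P w \<Omega>] Pi_carrier norm A_carrier C_carrier[rule_format, of "Suc m" i]
    unfolding r_def
    by (intro intertwining_of_inverses[OF _ _ _ _ _ _ _ _ A_gram]) auto
  have "Pim m = msum (r m) (r m) (\<lambda>i. G m i * Pim (m - 1) * A (m - 1) i) UNIV" if m_range: "m \<in> {1..n}" for m
  proof -
    obtain k where m: "m = Suc k"
      using m_range by (cases m) auto
    show ?thesis
      using m_range G Pi_carrier A_carrier C_carrier Pim_A[of k] unfolding m
      by (intro eq_msum_of_left_inverse) auto
  qed
  then show "Pim n = pi_formula TYPE('d) Pim A G n"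
    using Pi_carrier A_carrier G unfolding r_def by (intro pi_formula_of_recurrence) auto
qed

end
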